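(* Let $M=\{D_1,\dots,D_m\}$, $m\ge3$, be a 2-disk system of pairwise distinct disks with Vietoris–Rips scale $\nu_M>0$, and let $\lambda\ge\nu_M$. Then $\bigcap_{i=1}^m D(c_i;\lambda r_i)\ne\emptyset$ if and only if $\rho_M(\lambda)\ge0$. In particular $\rho_M(\sqrt{4/3}\,\nu_M)\ge0$.
   Context: A 2-disk system is a finite collection of closed disks $D_i=D(c_i;r_i)\subset\mathbb R^2$ with $r_i>0$; $\partial D$ is the boundary circle. $\nu_M=\max_{i<j}\|c_i-c_j\|/(r_i+r_j)$ is the Vietoris–Rips scale. Definition of $d_{ij}$ for two intersecting disks $D_i,D_j$ ($i\ne j$): write $c_j-c_i=(a,b)$, $\mathbf n_{ij}=(-b,a)$. (1) If $\partial D_i\cap\partial D_j\ne\emptyset$, $d_{ij}$ is the unique point of $\partial D_i\cap\partial D_j$ with $\langle d_{ij}-c_i,\mathbf n_{ij}\rangle\ge0$. (2) If $\partial D_i\cap\partial D_j=\emptyset$, let $\lambda_0=\|c_i-c_j\|/|r_i-r_j|$ and $d_{ij}$ is the unique point of $\partial D(c_i;\lambda_0 r_i)\cap\partial D(c_j;\lambda_0 r_j)$ (equal to $c_i$ if $c_i=c_j$). $d_{ij}(\lambda)$ denotes this point for the rescaled disks $D(c_i;\lambda r_i),D(c_j;\lambda r_j)$. For $\lambda\ge\nu_M$, $\rho_M(\lambda)=\max_{i\ne j}\min_{k\notin\{i,j\}}\big(\lambda r_k-\|d_{ij}(\lambda)-c_k\|\big)$. *)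

theory Defs
  imports "HOL-Analysis.Analysis"
begin

text \<open>A disk system with m disks is given by centres c i and radii r i for i < m;
  the disk D(c;r) is cball c r and its boundary circle is sphere c r.\<close>

definition nvec :: "real \<times> real \<Rightarrow> real \<times> real" where
  "nvec v = (- snd v, fst v)"

definition vr_scale :: "nat \<Rightarrow> (nat \<Rightarrow> real \<times> real) \<Rightarrow> (nat \<Rightarrow> real) \<Rightarrow> real" where
  "vr_scale m c r = Max {dist (c i) (c j) / (r i + r j) | i j. i < j \<and> j < m}"

definition dpt :: "real \<times> real \<Rightarrow> real \<Rightarrow> real \<times> real \<Rightarrow> real \<Rightarrow> real \<times> real" where
  "dpt ci ri cj rj =
    (if sphere ci ri \<inter> sphere cj rj \<noteq> {}
     then (THE p. p \<in> sphere ci ri \<inter> sphere cj rj \<and> inner (p - ci) (nvec (cj - ci)) \<ge> 0)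
     else if ci = cj then ci
     else (let l0 = dist ci cj / \<bar>ri - rj\<bar>
           in THE p. p \<in> sphere ci (l0 * ri) \<inter> sphere cj (l0 * rj)))"

definition dpt_scaled :: "(nat \<Rightarrow> real \<times> real) \<Rightarrow> (nat \<Rightarrow> real) \<Rightarrow> real \<Rightarrow> nat \<Rightarrow> nat \<Rightarrow> real \<times> real" where
  "dpt_scaled c r lam i j = dpt (c i) (lam * r i) (c j) (lam * r j)"

definition rho :: "nat \<Rightarrow> (nat \<Rightarrow> real \<times> real) \<Rightarrow> (nat \<Rightarrow> real) \<Rightarrow> real \<Rightarrow> real" where
  "rho m c r lam = Max {Min {lam * r k - norm (dpt_scaled c r lam i j - c k) | k. k < m \<and> k \<noteq> i \<and> k \<noteq> j}
                        | i j. i < m \<and> j < m \<and> i \<noteq> j}"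

end

theory Submission
  imports Defs
begin

text \<open>A point d_ij lying in all the other disks is exactly what rho >= 0 records, and for
  lambda >= nu_M any two disks meet, so d_ij also lies in D_i and D_j: rho >= 0 gives a common
  point. Conversely, a nonempty intersection of the disks always contains a corner of the form
  d_ij, found by following the boundary circle of a disk that touches the boundary of the
  intersection. For lambda = sqrt(4/3) nu_M any three disks meet, by a Jung-type minimax
  argument, and Helly's theorem in the plane yields a common point of all of them.\<close>

lemma norm_diff_square:
  fixes x y :: "'a::real_inner"
  shows "(norm (x - y))\<^sup>2 = (norm x)\<^sup>2 - 2 * inner x y + (norm y)\<^sup>2"
  by (simp add: power2_norm_eq_inner inner_diff_left inner_diff_right inner_commute)

lemma inner_nvec_self [simp]: "inner v (nvec v) = 0" "inner (nvec v) v = 0"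
  by (cases v; simp add: nvec_def)+

lemma inner_nvec_nvec [simp]: "inner (nvec v) (nvec v) = inner v v"
  by (cases v) (simp add: nvec_def)

lemma norm_nvec [simp]: "norm (nvec v) = norm v"
  by (simp add: norm_eq_sqrt_inner)

lemma inner_nvec_swap: "inner (z - q) (nvec (p - q)) = - inner (z - p) (nvec (q - p))"
  by (cases z; cases p; cases q) (simp add: nvec_def algebra_simps)

text \<open>Pythagoras in the orthogonal frame v, nvec v (Lagrange's identity in the plane).\<close>
lemma inner_nvec_Lagrange:
  "(inner w v)\<^sup>2 + (inner w (nvec v))\<^sup>2 = (norm w)\<^sup>2 * (norm v)\<^sup>2"
  unfolding power2_norm_eq_inner
  by (cases w; cases v) (simp add: nvec_def power2_eq_square algebra_simps)

lemma eq_if_inner_eq_inner_nvec_eq: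
  assumes "v \<noteq> 0" "inner w v = inner w' v" "inner w (nvec v) = inner w' (nvec v)"
  shows "w = w'"
proof -
  have "(norm (w - w'))\<^sup>2 * (norm v)\<^sup>2 = 0"
    using inner_nvec_Lagrange[of "w - w'" v] assms(2,3) by (simp add: inner_diff_left)
  then show ?thesis using assms(1) by simp
qed

lemma inner_eq_if_dist_eq:
  fixes p q y z :: "'a::real_inner"
  assumes "dist p y = dist p z" "dist q y = dist q z"
  shows "inner (y - p) (q - p) = inner (z - p) (q - p)"
proof -
  have "y - q = (y - p) - (q - p)" "z - q = (z - p) - (q - p)" by simp_all
  then show ?thesis
    using assms norm_diff_square[of "y - p" "q - p"] norm_diff_square[of "z - p" "q - p"]
    by (simp add: dist_norm norm_minus_commute)
qed

lemma eq_if_dist_eq_inner_nvec_eq: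
  assumes "p \<noteq> q" "dist p y = dist p z" "dist q y = dist q z"
    and "inner (y - p) (nvec (q - p)) = inner (z - p) (nvec (q - p))"
  shows "y = z"
  using eq_if_inner_eq_inner_nvec_eq[of "q - p" "y - p" "z - p"] inner_eq_if_dist_eq[OF assms(2,3)] assms
  by simp

lemma inner_nvec_square_eq_if_dist_eq:
  assumes "dist p y = dist p z" "dist q y = dist q z"
  shows "(inner (y - p) (nvec (q - p)))\<^sup>2 = (inner (z - p) (nvec (q - p)))\<^sup>2"
  using inner_nvec_Lagrange[of "y - p" "q - p"] inner_nvec_Lagrange[of "z - p" "q - p"]
    inner_eq_if_dist_eq[OF assms] assms(1)
  by (simp add: dist_norm norm_minus_commute)

lemma common_points_eq:
  assumes "p \<noteq> q" "dist p y = dist p z" "dist q y = dist q z"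
    and "inner (y - p) (nvec (q - p)) \<ge> 0" "inner (z - p) (nvec (q - p)) \<ge> 0"
  shows "y = z"
  using eq_if_dist_eq_inner_nvec_eq[OF assms(1-3)] inner_nvec_square_eq_if_dist_eq[OF assms(2,3)]
    assms(4,5) power2_eq_iff_nonneg by blast

lemma common_point_eq_if_inner_nvec_zero:
  assumes "p \<noteq> q" "dist p y = dist p z" "dist q y = dist q z"
    and "inner (y - p) (nvec (q - p)) = 0"
  shows "z = y"
  using eq_if_dist_eq_inner_nvec_eq[OF assms(1-3)] inner_nvec_square_eq_if_dist_eq[OF assms(2,3)] assms(4)
  by simp

lemma norm_frame_combination:
  "(norm (a *\<^sub>R v + b *\<^sub>R nvec v))\<^sup>2 = (a\<^sup>2 + b\<^sup>2) * (norm v)\<^sup>2"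
  unfolding power2_norm_eq_inner
  by (simp add: inner_add_left inner_add_right power2_eq_square algebra_simps)

text \<open>The point is x = p + (\<alpha> v + \<beta> nvec v) / d^2 with v = q - p and d = |v|: the
  coordinate \<alpha> = inner (x - p) v is forced by the law of cosines and then \<beta> \<ge> 0 by |x - p| = A.
  Its square is Heron's formula for 4 area(p q x)^2.\<close>
lemma sphere_inter_sphere_point:
  fixes p q :: "real \<times> real"
  defines "d \<equiv> dist p q"
  assumes "p \<noteq> q" "\<bar>A - B\<bar> \<le> d" "d \<le> A + B"
  shows "\<exists>x. dist p x = A \<and> dist q x = B \<and> inner (x - p) (nvec (q - p)) \<ge> 0 \<and>
             (inner (x - p) (nvec (q - p)))\<^sup>2 = (A * d)\<^sup>2 - ((d\<^sup>2 + A\<^sup>2 - B\<^sup>2) / 2)\<^sup>2"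
proof -
  define v where "v = q - p"
  define \<alpha> where "\<alpha> = (d\<^sup>2 + A\<^sup>2 - B\<^sup>2) / 2"
  define \<beta> where "\<beta> = sqrt ((A * d)\<^sup>2 - \<alpha>\<^sup>2)"
  define x where "x = p + (\<alpha> / d\<^sup>2) *\<^sub>R v + (\<beta> / d\<^sup>2) *\<^sub>R nvec v"
  have d: "d > 0" "norm v = d"
    using assms(2) by (simp_all add: d_def v_def dist_norm norm_minus_commute)
  have AB: "A \<ge> 0" "B \<ge> 0" using assms(3,4) by linarith+
  have "B\<^sup>2 \<le> (A + d)\<^sup>2" "(A - d)\<^sup>2 \<le> B\<^sup>2"
    using assms(3,4) AB d(1) by (simp_all add: abs_le_square_iff[symmetric])
  then have "0 \<le> ((A + d)\<^sup>2 - B\<^sup>2) * (B\<^sup>2 - (A - d)\<^sup>2)" by simp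
  also have "\<dots> = 4 * ((A * d)\<^sup>2 - \<alpha>\<^sup>2)"
    by (simp add: \<alpha>_def power2_eq_square field_simps)
  finally have radicand: "(A * d)\<^sup>2 - \<alpha>\<^sup>2 \<ge> 0" by simp
  have xp: "x - p = (\<alpha> / d\<^sup>2) *\<^sub>R v + (\<beta> / d\<^sup>2) *\<^sub>R nvec v" by (simp add: x_def)
  have "(norm (x - p))\<^sup>2 = (\<alpha>\<^sup>2 + \<beta>\<^sup>2) / d\<^sup>2"
    using d unfolding xp norm_frame_combination by (simp add: power_divide field_simps)
  also have "\<dots> = A\<^sup>2" using radicand d(1) by (simp add: \<beta>_def field_simps power_mult_distrib)
  finally have xA: "(norm (x - p))\<^sup>2 = A\<^sup>2" .
  have "inner (x - p) v = \<alpha>" "inner (x - p) (nvec v) = \<beta>"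
    using d unfolding xp by (simp_all add: inner_add_left power2_norm_eq_inner[symmetric])
  moreover have "(norm (x - q))\<^sup>2 = (norm ((x - p) - v))\<^sup>2" by (simp add: v_def)
  ultimately have "(norm (x - q))\<^sup>2 = B\<^sup>2"
    using xA d norm_diff_square[of "x - p" v] by (simp add: \<alpha>_def)
  with xA AB have "dist p x = A" "dist q x = B"
    by (simp_all add: dist_norm norm_minus_commute)
  moreover have "\<beta> \<ge> 0" "\<beta>\<^sup>2 = (A * d)\<^sup>2 - \<alpha>\<^sup>2" using radicand by (simp_all add: \<beta>_def)
  ultimately show ?thesis using \<open>inner (x - p) (nvec v) = \<beta>\<close>
    unfolding \<alpha>_def v_def by metis
qed

lemma dist_bounds_if_common_point:
  assumes "dist p x = a" "dist q x = b"
  shows "\<bar>a - b\<bar> \<le> dist p q" "dist p q \<le> a + b"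
  using assms dist_triangle[of p q x] dist_triangle[of q x p] dist_triangle[of p x q]
  by (auto simp: dist_commute)

lemma dpt_on_spheres:
  fixes p q :: "real \<times> real"
  assumes "p \<noteq> q" "sphere p a \<inter> sphere q b \<noteq> {}"
  shows "dist p (dpt p a q b) = a \<and> dist q (dpt p a q b) = b \<and>
         inner (dpt p a q b - p) (nvec (q - p)) \<ge> 0"
proof -
  obtain x where "x \<in> sphere p a" "x \<in> sphere q b" using assms(2) by blast
  then obtain y where y: "dist p y = a" "dist q y = b" "inner (y - p) (nvec (q - p)) \<ge> 0"
    using sphere_inter_sphere_point[OF assms(1)] dist_bounds_if_common_point by (metis mem_sphere)
  have "(THE z. z \<in> sphere p a \<inter> sphere q b \<and> inner (z - p) (nvec (q - p)) \<ge> 0) = y"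
    using y common_points_eq[OF assms(1)] by (intro the_equality) auto
  with y assms(2) show ?thesis unfolding dpt_def by simp
qed

lemma common_point_eq_dpt:
  fixes p q x :: "real \<times> real"
  assumes "p \<noteq> q" "dist p x = a" "dist q x = b"
  shows "x = dpt p a q b \<or> x = dpt q b p a"
proof (cases "inner (x - p) (nvec (q - p)) \<ge> 0")
  case True
  have "x \<in> sphere p a \<inter> sphere q b" using assms(2,3) by simp
  then have "sphere p a \<inter> sphere q b \<noteq> {}" by blast
  from dpt_on_spheres[OF assms(1) this] have "x = dpt p a q b"
    using common_points_eq[OF assms(1), of x "dpt p a q b"] True assms(2,3) by simp
  then show ?thesis ..
next
  case False
  then have pos: "inner (x - q) (nvec (p - q)) \<ge> 0" using inner_nvec_swap[of x q p] by linarith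
  have qp: "q \<noteq> p" using assms(1) by simp
  have "x \<in> sphere q b \<inter> sphere p a" using assms(2,3) by simp
  then have "sphere q b \<inter> sphere p a \<noteq> {}" by blast
  from dpt_on_spheres[OF qp this] have "x = dpt q b p a"
    using common_points_eq[OF qp, of x "dpt q b p a"] pos assms(2,3) by simp
  then show ?thesis ..
qed

lemma Heron_degenerate:
  fixes A B d :: real
  assumes "\<bar>A - B\<bar> = d"
  shows "(A * d)\<^sup>2 = ((d\<^sup>2 + A\<^sup>2 - B\<^sup>2) / 2)\<^sup>2"
proof -
  have "B = A - d \<or> B = A + d" using assms by linarith
  then have "d\<^sup>2 + A\<^sup>2 - B\<^sup>2 = 2 * A * d \<or> d\<^sup>2 + A\<^sup>2 - B\<^sup>2 = - 2 * A * d"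
    by (auto simp: power2_eq_square algebra_simps)
  then show ?thesis by (auto simp: power2_eq_square)
qed

text \<open>Disjoint circles whose centres are at distance at most a + b are nested; shrinking both
  radii by the factor l makes them internally tangent, and d_ij is the point of tangency.\<close>
lemma dpt_tangent:
  fixes p q :: "real \<times> real"
  assumes "p \<noteq> q" "sphere p a \<inter> sphere q b = {}" "a \<ge> 0" "b \<ge> 0" "dist p q \<le> a + b"
  defines "l \<equiv> dist p q / \<bar>a - b\<bar>"
  shows "0 < l \<and> l \<le> 1 \<and> dist p (dpt p a q b) = l * a \<and> dist q (dpt p a q b) = l * b"
proof -
  define d where "d = dist p q"
  have d: "d > 0" using assms(1) by (simp add: d_def)
  have "d \<le> \<bar>a - b\<bar>"
  proof (rule ccontr)
    assume "\<not> d \<le> \<bar>a - b\<bar>"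
    then have "\<bar>a - b\<bar> \<le> dist p q" by (simp add: d_def)
    then obtain x where "dist p x = a" "dist q x = b"
      using sphere_inter_sphere_point[OF assms(1) _ assms(5)] by blast
    then have "x \<in> sphere p a \<inter> sphere q b" by simp
    with assms(2) show False by blast
  qed
  moreover have "\<bar>a - b\<bar> > 0" using \<open>d \<le> \<bar>a - b\<bar>\<close> d by linarith
  ultimately have l: "0 < l" "l \<le> 1" "l * \<bar>a - b\<bar> = d"
    using d by (simp_all add: l_def d_def)
  have "\<bar>l * a - l * b\<bar> = l * \<bar>a - b\<bar>"
    using l(1) by (simp add: right_diff_distrib[symmetric] abs_mult)
  with l(3) have ld: "\<bar>l * a - l * b\<bar> = d" by simp
  have "l * \<bar>a - b\<bar> \<le> l * (a + b)" using assms(3,4) l(1) by (intro mult_left_mono) auto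
  with l(3) have "d \<le> l * a + l * b" by (simp add: distrib_left)
  moreover have "\<bar>l * a - l * b\<bar> \<le> d" using ld by simp
  ultimately obtain y where y: "dist p y = l * a" "dist q y = l * b"
    and "(inner (y - p) (nvec (q - p)))\<^sup>2 = (l * a * d)\<^sup>2 - ((d\<^sup>2 + (l * a)\<^sup>2 - (l * b)\<^sup>2) / 2)\<^sup>2"
    using sphere_inter_sphere_point[OF assms(1), of "l * a" "l * b"] unfolding d_def by blast
  then have y0: "inner (y - p) (nvec (q - p)) = 0" using Heron_degenerate[OF ld] by simp
  have "(THE z. z \<in> sphere p (l * a) \<inter> sphere q (l * b)) = y"
    using y common_point_eq_if_inner_nvec_zero[OF assms(1) _ _ y0] by (intro the_equality) auto
  with assms(1,2) y l show ?thesis unfolding dpt_def l_def Let_def by simp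
qed

lemma dpt_in_cballs:
  fixes p q :: "real \<times> real"
  assumes "a > 0" "b > 0" "(p, a) \<noteq> (q, b)" "dist p q \<le> a + b"
  shows "dpt p a q b \<in> cball p a \<inter> cball q b"
proof (cases "sphere p a \<inter> sphere q b = {}")
  case False
  then have "p \<noteq> q" using assms(3) by auto
  with dpt_on_spheres[OF this False] show ?thesis by simp
next
  case True
  show ?thesis
  proof (cases "p = q")
    case True
    with \<open>sphere p a \<inter> sphere q b = {}\<close> assms show ?thesis by (simp add: dpt_def)
  next
    case False
    then obtain l where "0 < l" "l \<le> 1" "dist p (dpt p a q b) = l * a" "dist q (dpt p a q b) = l * b"
      using dpt_tangent[OF False True] assms by (meson less_imp_le)
    with assms show ?thesis by (simp add: mult_left_le_one_le)
  qed
qed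

lemma inner_gt_neg_half_if_dist_le:
  fixes u w :: "'a::real_inner"
  assumes "norm u = \<mu> * a" "norm w = \<mu> * b" "a > 0" "b > 0"
    and "norm (u - w) \<le> \<nu> * (a + b)" "sqrt (4/3) * \<nu> < \<mu>"
  shows "inner u w > -(1/2) * norm u * norm w"
proof (rule ccontr)
  assume "\<not> ?thesis"
  then have obtuse: "inner u w \<le> -(1/2) * norm u * norm w" by simp
  have "0 \<le> \<nu> * (a + b)" using assms(5) norm_ge_zero[of "u - w"] by linarith
  then have "\<nu> \<ge> 0" using assms(3,4) by (simp add: zero_le_mult_iff)
  then have "(4/3) * \<nu>\<^sup>2 < \<mu>\<^sup>2"
    using assms(6) power_strict_mono[of "sqrt (4/3) * \<nu>" \<mu> 2] by (simp add: power_mult_distrib)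
  moreover have pos: "a\<^sup>2 + a * b + b\<^sup>2 > 0" using assms(3,4) by (simp add: add_pos_pos)
  ultimately have "(4/3) * \<nu>\<^sup>2 * (a\<^sup>2 + a * b + b\<^sup>2) < \<mu>\<^sup>2 * (a\<^sup>2 + a * b + b\<^sup>2)" by simp
  also have "\<dots> \<le> (norm (u - w))\<^sup>2"
    using obtuse norm_diff_square[of u w] assms(1,2) by (simp add: power2_eq_square algebra_simps)
  also have "\<dots> \<le> (\<nu> * (a + b))\<^sup>2" using assms(5) by (simp add: power_mono)
  also have "\<dots> \<le> (4/3) * \<nu>\<^sup>2 * (a\<^sup>2 + a * b + b\<^sup>2)"
  proof -
    have "(a + b)\<^sup>2 \<le> 4/3 * (a\<^sup>2 + a * b + b\<^sup>2)"
      using zero_le_power2[of "a - b"] by (simp add: power2_eq_square field_simps)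
    then have "\<nu>\<^sup>2 * (a + b)\<^sup>2 \<le> \<nu>\<^sup>2 * (4/3 * (a\<^sup>2 + a * b + b\<^sup>2))"
      by (rule mult_left_mono) simp
    then show ?thesis by (simp only: power_mult_distrib mult_ac)
  qed
  finally show False by simp
qed

lemma inner_sum_unit_vectors_pos:
  fixes u :: "'i \<Rightarrow> 'a::real_inner"
  assumes "finite A" "card A \<le> 3" "\<forall>i\<in>A. u i \<noteq> 0"
    and "\<forall>i\<in>A. \<forall>j\<in>A. i \<noteq> j \<longrightarrow> inner (u i) (u j) > -(1/2) * norm (u i) * norm (u j)"
    and "j \<in> A"
  shows "inner (\<Sum>i\<in>A. u i /\<^sub>R norm (u i)) (u j) > 0"
proof -
  let ?S = "\<Sum>i\<in>A - {j}. inner (u i) (u j) / norm (u i)"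
  have "inner (\<Sum>i\<in>A. u i /\<^sub>R norm (u i)) (u j) = (\<Sum>i\<in>A. inner (u i) (u j) / norm (u i))"
    by (simp add: inner_sum_left divide_inverse_commute)
  also have "\<dots> = inner (u j) (u j) / norm (u j) + ?S"
    using sum.remove[OF assms(1,5)] by simp
  also have "inner (u j) (u j) / norm (u j) = norm (u j)"
    by (simp add: dot_square_norm power2_eq_square)
  finally have eq: "inner (\<Sum>i\<in>A. u i /\<^sub>R norm (u i)) (u j) = norm (u j) + ?S" .
  have uj: "norm (u j) > 0" using assms(3,5) by simp
  show ?thesis
  proof (cases "A - {j} = {}")
    case True
    then have "?S = 0" by (metis sum.empty)
    then show ?thesis using eq uj by simp
  next
    case False
    have "(\<Sum>i\<in>A - {j}. -(1/2) * norm (u j)) < ?S"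
    proof (rule sum_strict_mono)
      fix i assume i: "i \<in> A - {j}"
      then have "norm (u i) > 0" using assms(3) by simp
      with i assms(4,5) show "-(1/2) * norm (u j) < inner (u i) (u j) / norm (u i)"
        by (simp add: field_simps)
    qed (use assms(1) False in auto)
    moreover have "card (A - {j}) \<le> 2" using assms(1,2,5) by simp
    then have "(\<Sum>i\<in>A - {j}. -(1/2) * norm (u j)) \<ge> - norm (u j)"
      using uj by simp
    ultimately show ?thesis using eq by linarith
  qed
qed

lemma eventually_dist_less_at_right:
  fixes x c e :: "'a::real_inner"
  assumes "inner e (c - x) > 0"
  shows "\<forall>\<^sub>F t in at_right 0. dist (x + t *\<^sub>R e) c < dist x c"
proof -
  define b where "b = 2 * inner e (c - x) / ((norm e)\<^sup>2 + 1)"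
  have "b > 0" using assms by (simp add: b_def add_nonneg_pos)
  then have "\<forall>\<^sub>F t in at_right 0. t \<in> {0<..<b}" by (rule eventually_at_right_real)
  then show ?thesis
  proof (rule eventually_mono)
    fix t assume t: "t \<in> {0<..<b}"
    then have "t * ((norm e)\<^sup>2 + 1) < 2 * inner e (c - x)"
      by (simp add: b_def pos_less_divide_eq add_nonneg_pos)
    then have "t * (norm e)\<^sup>2 < 2 * inner e (c - x)" using t by (simp add: algebra_simps)
    then have "t * (t * (norm e)\<^sup>2) < t * (2 * inner e (c - x))" using t by simp
    moreover have "(norm (x + t *\<^sub>R e - c))\<^sup>2 = (norm (c - x))\<^sup>2 - 2 * t * inner e (c - x) + t\<^sup>2 * (norm e)\<^sup>2"
      using norm_diff_square[of "c - x" "t *\<^sub>R e"]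
      by (simp add: norm_minus_commute[of "x + t *\<^sub>R e"] algebra_simps inner_commute)
    ultimately have "(norm (x + t *\<^sub>R e - c))\<^sup>2 < (norm (x - c))\<^sup>2"
      by (simp add: norm_minus_commute[of c x] power2_eq_square algebra_simps)
    then show "dist (x + t *\<^sub>R e) c < dist x c" by (simp add: dist_norm power2_less_imp_less)
  qed
qed

text \<open>A point minimising the largest ratio dist x (c i) / R i exists by compactness; the
  minimising pairs (x, \<mu>) are sought in a compact subset of the product space.\<close>
lemma minimax_centre_exists:
  fixes c :: "'i \<Rightarrow> 'a::euclidean_space"
  assumes "finite I" "I \<noteq> {}" "\<forall>i\<in>I. R i > 0"
  obtains x \<mu> where "\<forall>i\<in>I. dist x (c i) \<le> \<mu> * R i" "\<nexists>y. \<forall>i\<in>I. dist y (c i) < \<mu> * R i"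
proof -
  define ratio where "ratio y = Max ((\<lambda>i. dist y (c i) / R i) ` I)" for y
  have ratio: "dist y (c i) \<le> ratio y * R i" if "i \<in> I" for i y
  proof -
    have "dist y (c i) / R i \<le> ratio y" using that assms(1) by (simp add: ratio_def)
    then show ?thesis using that assms(3) by (simp add: pos_divide_le_eq)
  qed
  obtain i0 where i0: "i0 \<in> I" using assms(2) by blast
  have ratio_nonneg: "ratio y \<ge> 0" for y
    using ratio[OF i0, of y] assms(3) i0 by (meson zero_le_dist zero_le_mult_iff not_le order_trans less_imp_le)
  define M where "M = ratio (c i0)"
  define T where "T = (cball (c i0) (M * R i0) \<times> {0..M}) \<inter> (\<Inter>i\<in>I. {z. dist (fst z) (c i) \<le> snd z * R i})"
  have "compact T"
    unfolding T_def by (intro compact_Int_closed compact_Times closed_INT ballI closed_Collect_le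
        continuous_intros compact_cball compact_Icc)
  moreover have "(c i0, M) \<in> T"
    using ratio ratio_nonneg assms(3) i0 by (auto simp: T_def M_def)
  ultimately obtain z where z: "z \<in> T" "\<forall>w\<in>T. snd z \<le> snd w"
    using continuous_attains_inf[of T snd] continuous_on_snd[OF continuous_on_id] by blast
  show ?thesis
  proof
    show "\<forall>i\<in>I. dist (fst z) (c i) \<le> snd z * R i" using z(1) by (auto simp: T_def)
    show "\<nexists>y. \<forall>i\<in>I. dist y (c i) < snd z * R i"
    proof
      assume "\<exists>y. \<forall>i\<in>I. dist y (c i) < snd z * R i"
      then obtain y where y: "\<forall>i\<in>I. dist y (c i) < snd z * R i" by blast
      then have less: "ratio y < snd z"
        using assms by (auto simp: ratio_def pos_divide_less_eq)
      have "snd z \<le> M" using z(1) by (auto simp: T_def)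
      then have "ratio y * R i0 \<le> M * R i0"
        using less assms(3) i0 by (intro mult_right_mono) auto
      then have "dist y (c i0) \<le> M * R i0" using ratio[OF i0, of y] by linarith
      then have "(y, ratio y) \<in> T"
        using ratio ratio_nonneg less \<open>snd z \<le> M\<close> by (auto simp: T_def dist_commute)
      with z(2) less show False by force
    qed
  qed
qed

lemma exists_strictly_inside_if_inward:
  fixes c :: "'i \<Rightarrow> 'a::real_inner"
  assumes "finite I" "\<forall>i\<in>I. dist x (c i) \<le> \<rho> i"
    and "\<forall>i\<in>I. dist x (c i) = \<rho> i \<longrightarrow> inner e (c i - x) > 0"
  shows "\<exists>y. \<forall>i\<in>I. dist y (c i) < \<rho> i"
proof -
  have "\<forall>i\<in>I. \<forall>\<^sub>F t in at_right 0. dist (x + t *\<^sub>R e) (c i) < \<rho> i"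
  proof
    fix i assume i: "i \<in> I"
    show "\<forall>\<^sub>F t in at_right 0. dist (x + t *\<^sub>R e) (c i) < \<rho> i"
    proof (cases "dist x (c i) = \<rho> i")
      case True
      with i assms(3) have "inner e (c i - x) > 0" by blast
      from eventually_dist_less_at_right[OF this] show ?thesis by (simp only: True)
    next
      case False
      moreover have "dist x (c i) \<le> \<rho> i" using i assms(2) by blast
      ultimately have less: "dist x (c i) < \<rho> i" by linarith
      have "isCont (\<lambda>t. dist (x + t *\<^sub>R e) (c i)) 0" by (intro continuous_intros)
      then have "((\<lambda>t. dist (x + t *\<^sub>R e) (c i)) \<longlongrightarrow> dist x (c i)) (at_right 0)"
        unfolding isCont_def using tendsto_within_subset by fastforce
      from this less show ?thesis by (rule order_tendstoD(2))
    qed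
  qed
  from eventually_ball_finite[OF assms(1) this]
  obtain t where "\<forall>i\<in>I. dist (x + t *\<^sub>R e) (c i) < \<rho> i"
    using eventually_happens'[OF trivial_limit_at_right_real] by blast
  then show ?thesis ..
qed

text \<open>At a minimax centre the active radius vectors pairwise make angles below 120 degrees
  unless \<mu> \<le> sqrt(4/3) \<nu>; the sum of their unit vectors would then point into every active disk.\<close>
lemma minimax_radius_le:
  fixes c :: "'i \<Rightarrow> 'a::real_inner"
  assumes "finite I" "card I \<le> 3" "\<forall>i\<in>I. R i > 0"
    and "\<forall>i\<in>I. \<forall>j\<in>I. dist (c i) (c j) \<le> \<nu> * (R i + R j)"
    and x: "\<forall>i\<in>I. dist x (c i) \<le> \<mu> * R i" and minimal: "\<nexists>y. \<forall>i\<in>I. dist y (c i) < \<mu> * R i"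
  shows "\<mu> \<le> sqrt (4/3) * \<nu>"
proof (rule ccontr)
  assume "\<not> ?thesis"
  then have big: "sqrt (4/3) * \<nu> < \<mu>" by simp
  define A where "A = {i\<in>I. dist x (c i) = \<mu> * R i}"
  define u where "u i = c i - x" for i
  define e where "e = (\<Sum>i\<in>A. u i /\<^sub>R norm (u i))"
  have "A \<subseteq> I" by (auto simp: A_def)
  then have A: "finite A" "card A \<le> 3"
    using finite_subset[OF _ assms(1)] card_mono[OF assms(1)] assms(2) by (auto intro: order_trans)
  have norm_u: "norm (u i) = \<mu> * R i" if "i \<in> A" for i
    using that by (simp add: A_def u_def dist_norm norm_minus_commute)
  have angle: "inner (u i) (u j) > -(1/2) * norm (u i) * norm (u j)" if "i \<in> A" "j \<in> A" for i j
  proof (rule inner_gt_neg_half_if_dist_le[OF norm_u norm_u _ _ _ big])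
    show "R i > 0" "R j > 0" using that \<open>A \<subseteq> I\<close> assms(3) by auto
    show "norm (u i - u j) \<le> \<nu> * (R i + R j)"
      using that \<open>A \<subseteq> I\<close> assms(4) by (auto simp: u_def dist_norm)
  qed fact+
  have nonzero: "\<forall>i\<in>A. u i \<noteq> 0"
  proof
    fix i assume "i \<in> A"
    with angle[OF this this] show "u i \<noteq> 0" by auto
  qed
  have "\<forall>i\<in>I. dist x (c i) = \<mu> * R i \<longrightarrow> inner e (c i - x) > 0"
  proof (intro ballI impI)
    fix i assume "i \<in> I" "dist x (c i) = \<mu> * R i"
    then have "i \<in> A" by (simp add: A_def)
    from inner_sum_unit_vectors_pos[OF A nonzero _ this] angle
    show "inner e (c i - x) > 0" by (simp add: e_def u_def)
  qed
  then have "\<exists>y. \<forall>i\<in>I. dist y (c i) < \<mu> * R i"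
    by (rule exists_strictly_inside_if_inward[OF assms(1) x])
  with minimal show False by blast
qed

lemma Jung_three_balls:
  fixes c :: "'i \<Rightarrow> 'a::euclidean_space"
  assumes "finite I" "I \<noteq> {}" "card I \<le> 3" "\<forall>i\<in>I. R i > 0"
    and "\<forall>i\<in>I. \<forall>j\<in>I. dist (c i) (c j) \<le> \<nu> * (R i + R j)"
  shows "\<exists>x. \<forall>i\<in>I. dist x (c i) \<le> sqrt (4/3) * \<nu> * R i"
proof -
  obtain x \<mu> where x: "\<forall>i\<in>I. dist x (c i) \<le> \<mu> * R i"
    and minimal: "\<nexists>y. \<forall>i\<in>I. dist y (c i) < \<mu> * R i"
    using minimax_centre_exists[OF assms(1,2,4)] by blast
  have "\<mu> \<le> sqrt (4/3) * \<nu>" by (rule minimax_radius_le[OF assms(1,3-5) x minimal])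
  with x assms(4) show ?thesis by (meson mult_right_mono order_trans less_imp_le)
qed

lemma dist_le_vr_scale:
  assumes "i < m" "j < m" "i \<noteq> j" "r i > 0" "r j > 0"
  shows "dist (c i) (c j) \<le> vr_scale m c r * (r i + r j)"
proof -
  let ?S = "{dist (c i) (c j) / (r i + r j) | i j. i < j \<and> j < m}"
  have "?S \<subseteq> (\<lambda>(i, j). dist (c i) (c j) / (r i + r j)) ` ({..<m} \<times> {..<m})" by auto
  then have "finite ?S" by (rule finite_subset) simp
  moreover have "dist (c i) (c j) / (r i + r j) \<in> ?S"
  proof (cases "i < j")
    case False
    then have "j < i" using assms(3) by simp
    then have "dist (c j) (c i) / (r j + r i) \<in> ?S" using assms(1) by blast
    then show ?thesis by (simp add: dist_commute add.commute)
  qed (use assms in auto)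
  ultimately have "dist (c i) (c j) / (r i + r j) \<le> vr_scale m c r"
    unfolding vr_scale_def by simp
  then show ?thesis using assms(4,5) by (simp add: pos_divide_le_eq)
qed

lemma rho_nonneg_iff:
  assumes "m \<ge> 3"
  shows "rho m c r lam \<ge> 0 \<longleftrightarrow> (\<exists>i<m. \<exists>j<m. i \<noteq> j \<and>
           (\<forall>k<m. k \<noteq> i \<and> k \<noteq> j \<longrightarrow> dist (c k) (dpt_scaled c r lam i j) \<le> lam * r k))"
proof -
  define G where "G i j = Min {lam * r k - norm (dpt_scaled c r lam i j - c k) | k. k < m \<and> k \<noteq> i \<and> k \<noteq> j}"
    for i j
  have G: "G i j \<ge> 0 \<longleftrightarrow> (\<forall>k<m. k \<noteq> i \<and> k \<noteq> j \<longrightarrow> dist (c k) (dpt_scaled c r lam i j) \<le> lam * r k)"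
    for i j
  proof -
    have "\<exists>k::nat. k < 3 \<and> k \<noteq> i \<and> k \<noteq> j"
      by (rule exI[of _ "if i \<noteq> 0 \<and> j \<noteq> 0 then 0 else if i \<noteq> 1 \<and> j \<noteq> 1 then 1 else 2"]) auto
    then obtain k where "k < 3" "k \<noteq> i" "k \<noteq> j" by blast
    then have "lam * r k - norm (dpt_scaled c r lam i j - c k)
        \<in> {lam * r k - norm (dpt_scaled c r lam i j - c k) | k. k < m \<and> k \<noteq> i \<and> k \<noteq> j}"
      using assms by force
    then show ?thesis unfolding G_def by (subst Min_ge_iff) (auto simp: dist_norm norm_minus_commute)
  qed
  let ?OS = "{G i j | i j. i < m \<and> j < m \<and> i \<noteq> j}"
  have "?OS \<subseteq> (\<lambda>(i, j). G i j) ` ({..<m} \<times> {..<m})" by auto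
  then have "finite ?OS" by (rule finite_subset) simp
  moreover have "G 0 1 \<in> ?OS" using assms by force
  ultimately have "rho m c r lam \<ge> 0 \<longleftrightarrow> (\<exists>a\<in>?OS. 0 \<le> a)"
    unfolding rho_def G_def[symmetric] by (subst Max_ge_iff) auto
  then have "rho m c r lam \<ge> 0 \<longleftrightarrow> (\<exists>i<m. \<exists>j<m. i \<noteq> j \<and> G i j \<ge> 0)" by blast
  with G show ?thesis by simp
qed

lemma sphere_not_subset_cball:
  fixes a b :: "'a::euclidean_space"
  assumes "\<not> cball a s \<subseteq> cball b t"
  obtains y where "y \<in> sphere a s" "y \<notin> cball b t"
proof -
  have far: "t < dist a b + s" "s \<ge> 0" using assms by (auto simp: cball_subset_cball_iff)
  show ?thesis
  proof (cases "a = b")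
    case True
    obtain w :: 'a where "norm w = s" using vector_choose_size far(2) by blast
    with True far show ?thesis by (intro that[of "a + w"]) (auto simp: dist_norm)
  next
    case False
    define y where "y = a + (s / dist a b) *\<^sub>R (a - b)"
    have "dist a y = s" using False far(2) by (simp add: y_def dist_norm)
    moreover have "y - b = (1 + s / dist a b) *\<^sub>R (a - b)" by (simp add: y_def algebra_simps)
    then have "dist b y = dist a b + s"
      using False far(2) by (simp add: dist_norm norm_minus_commute[of b] distrib_right)
    ultimately show ?thesis using far(1) by (intro that[of y]) (auto simp: dist_commute)
  qed
qed

lemma frontier_Inter_cball:
  fixes c :: "'i \<Rightarrow> 'a::real_normed_vector"
  assumes "finite J" "z \<in> frontier (\<Inter>k\<in>J. cball (c k) (R k))"
  shows "z \<in> (\<Inter>k\<in>J. cball (c k) (R k))" "\<exists>k\<in>J. dist (c k) z = R k"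
proof -
  show inK: "z \<in> (\<Inter>k\<in>J. cball (c k) (R k))"
    using assms(2) frontier_subset_closed[of "\<Inter>k\<in>J. cball (c k) (R k)"] closed_INT by blast
  show "\<exists>k\<in>J. dist (c k) z = R k"
  proof (rule ccontr)
    assume "\<not> ?thesis"
    with inK have "z \<in> (\<Inter>k\<in>J. ball (c k) (R k))" by force
    moreover have "open (\<Inter>k\<in>J. ball (c k) (R k))" using assms(1) by auto
    moreover have "(\<Inter>k\<in>J. ball (c k) (R k)) \<subseteq> (\<Inter>k\<in>J. cball (c k) (R k))" by auto
    ultimately have "z \<in> interior (\<Inter>k\<in>J. cball (c k) (R k))" by (meson interior_maximal subsetD)
    with assms(2) show False by (simp add: frontier_def)
  qed
qed

text \<open>Some disk D i touches the boundary of the intersection K. Either D i lies inside every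
  disk, and then so does each d_ij, or its boundary circle leaves K; by connectedness the circle
  then crosses the frontier of the intersection of the other disks at a corner point of K,
  which is d_ik or d_ki.\<close>
lemma dpt_in_Inter_cball:
  fixes c :: "nat \<Rightarrow> real \<times> real" and R :: "nat \<Rightarrow> real" and m :: nat
  defines "K \<equiv> \<Inter>i\<in>{..<m}. cball (c i) (R i)"
  assumes "m \<ge> 2" "\<forall>i<m. R i > 0" "\<forall>i<m. \<forall>j<m. i \<noteq> j \<longrightarrow> (c i, R i) \<noteq> (c j, R j)"
    and "K \<noteq> {}"
  shows "\<exists>i<m. \<exists>j<m. i \<noteq> j \<and> dpt (c i) (R i) (c j) (R j) \<in> K"
proof -
  obtain x where x: "x \<in> K" using assms(5) by blast
  have dpt_in: "dpt (c i) (R i) (c j) (R j) \<in> cball (c i) (R i)" if "i < m" "j < m" "i \<noteq> j" for i j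
  proof -
    have "dist (c i) x \<le> R i" "dist x (c j) \<le> R j" using x that by (auto simp: K_def dist_commute)
    then have "dist (c i) (c j) \<le> R i + R j" using dist_triangle[of "c i" "c j" x] by linarith
    with that assms(3,4) show ?thesis using dpt_in_cballs[of "R i" "R j"] by blast
  qed
  have "K \<noteq> UNIV"
  proof
    assume "K = UNIV"
    moreover have "K \<subseteq> cball (c 0) (R 0)" using assms(2) by (auto simp: K_def)
    ultimately show False using bounded_subset[OF bounded_cball] not_bounded_UNIV by metis
  qed
  then obtain p where "p \<in> frontier K" using frontier_not_empty assms(5) by blast
  then obtain i where pK: "p \<in> K" and i: "i < m" "dist (c i) p = R i"
    using frontier_Inter_cball[of "{..<m}" p c R] by (auto simp: K_def)
  show ?thesis
  proof (cases "\<forall>k<m. cball (c i) (R i) \<subseteq> cball (c k) (R k)")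
    case True
    define j where "j = (if i = 0 then 1 else 0 :: nat)"
    have j: "j < m" "i \<noteq> j" using assms(2) by (auto simp: j_def)
    have "dpt (c i) (R i) (c j) (R j) \<in> K" using True dpt_in[OF i(1) j] unfolding K_def by blast
    with i(1) j show ?thesis by blast
  next
    case False
    then obtain k y where k: "k < m" and y: "y \<in> sphere (c i) (R i)" "y \<notin> cball (c k) (R k)"
      using sphere_not_subset_cball by metis
    define K' where "K' = (\<Inter>k\<in>{..<m} - {i}. cball (c k) (R k))"
    have K: "K = cball (c i) (R i) \<inter> K'" using i(1) by (auto simp: K_def K'_def)
    have "sphere (c i) (R i) \<inter> K' \<noteq> {}" using pK i by (auto simp: K)
    moreover have "sphere (c i) (R i) - K' \<noteq> {}"
      using y k by (cases "k = i") (auto simp: K'_def)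
    moreover have "connected (sphere (c i) (R i))" by (rule connected_sphere) simp
    ultimately obtain z where z: "z \<in> sphere (c i) (R i)" "z \<in> frontier K'"
      using connected_Int_frontier by blast
    then obtain l where "z \<in> K'" and l: "l < m" "l \<noteq> i" "dist (c l) z = R l"
      using frontier_Inter_cball[of "{..<m} - {i}" z c R] by (auto simp: K'_def)
    with z(1) have zK: "z \<in> K" by (simp add: K)
    have "c i \<noteq> c l" using assms(4) i l z(1) by (metis mem_sphere)
    then have "z = dpt (c i) (R i) (c l) (R l) \<or> z = dpt (c l) (R l) (c i) (R i)"
      using common_point_eq_dpt z(1) l(3) by simp
    with zK i(1) l(1,2) show ?thesis by metis
  qed
qed

lemma Inter_cball_nonempty_iff_rho_nonneg:
  fixes m :: nat and c :: "nat \<Rightarrow> real \<times> real" and r :: "nat \<Rightarrow> real" and lam :: real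
  assumes "m \<ge> 3" "\<forall>i<m. r i > 0"
    and distinct: "\<forall>i<m. \<forall>j<m. i \<noteq> j \<longrightarrow> cball (c i) (r i) \<noteq> cball (c j) (r j)"
    and "vr_scale m c r > 0" "lam \<ge> vr_scale m c r"
  shows "(\<Inter>i\<in>{..<m}. cball (c i) (lam * r i)) \<noteq> {} \<longleftrightarrow> rho m c r lam \<ge> 0"
proof -
  let ?K = "\<Inter>i\<in>{..<m}. cball (c i) (lam * r i)"
  have lam: "lam > 0" using assms(4,5) by linarith
  have distinct_scaled: "(c i, lam * r i) \<noteq> (c j, lam * r j)" if "i < m" "j < m" "i \<noteq> j" for i j
  proof
    assume "(c i, lam * r i) = (c j, lam * r j)"
    then have "c i = c j" "r i = r j" using lam by auto
    with distinct that show False by metis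
  qed
  have dpt_in: "dpt_scaled c r lam i j \<in> cball (c i) (lam * r i) \<inter> cball (c j) (lam * r j)"
    if ij: "i < m" "j < m" "i \<noteq> j" for i j
  proof -
    have "dist (c i) (c j) \<le> vr_scale m c r * (r i + r j)"
      using dist_le_vr_scale ij assms(2) by blast
    also have "\<dots> \<le> lam * (r i + r j)"
      using assms(2,5) ij by (intro mult_right_mono) (auto simp: add_nonneg_nonneg less_imp_le)
    also have "\<dots> = lam * r i + lam * r j" by (simp add: distrib_left)
    finally show ?thesis
      using dpt_in_cballs distinct_scaled[OF ij] assms(2) ij lam by (simp add: dpt_scaled_def)
  qed
  show ?thesis
  proof
    assume "?K \<noteq> {}"
    then obtain i j where "i < m" "j < m" "i \<noteq> j" "dpt_scaled c r lam i j \<in> ?K"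
      using dpt_in_Inter_cball[of m "\<lambda>i. lam * r i" c] assms(1,2) distinct_scaled lam
      by (auto simp: dpt_scaled_def)
    then show "rho m c r lam \<ge> 0" using rho_nonneg_iff[OF assms(1)] by auto
  next
    assume "rho m c r lam \<ge> 0"
    then obtain i j where ij: "i < m" "j < m" "i \<noteq> j"
      and others: "\<forall>k<m. k \<noteq> i \<and> k \<noteq> j \<longrightarrow> dist (c k) (dpt_scaled c r lam i j) \<le> lam * r k"
      using rho_nonneg_iff[OF assms(1)] by blast
    have "dpt_scaled c r lam i j \<in> ?K" using others dpt_in[OF ij] by auto
    then show "?K \<noteq> {}" by blast
  qed
qed

lemma Inter_cball_sqrt_four_thirds_nonempty:
  fixes m :: nat and c :: "nat \<Rightarrow> real \<times> real" and r :: "nat \<Rightarrow> real"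
  assumes "m \<ge> 3" "\<forall>i<m. r i > 0"
    and distinct: "\<forall>i<m. \<forall>j<m. i \<noteq> j \<longrightarrow> cball (c i) (r i) \<noteq> cball (c j) (r j)"
    and "vr_scale m c r > 0"
  shows "(\<Inter>i\<in>{..<m}. cball (c i) (sqrt (4/3) * vr_scale m c r * r i)) \<noteq> {}"
proof -
  define D where "D i = cball (c i) (sqrt (4/3) * vr_scale m c r * r i)" for i
  have "inj_on D {..<m}"
  proof (rule inj_onI, rule ccontr)
    fix i j assume "i \<in> {..<m}" "j \<in> {..<m}" "D i = D j" "i \<noteq> j"
    then show False using distinct assms(2,4) by (auto simp: D_def cball_eq_cball_iff mult_less_0_iff)
  qed
  have "\<Inter>(D ` {..<m}) \<noteq> {}"
  proof (rule Helly)
    show "DIM(real \<times> real) + 1 \<le> card (D ` {..<m})"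
      using card_image[OF \<open>inj_on D {..<m}\<close>] assms(1) by simp
    show "\<forall>s\<in>D ` {..<m}. convex s" by (auto simp: D_def)
    fix T assume T: "T \<subseteq> D ` {..<m}" "card T = DIM(real \<times> real) + 1"
    then obtain J where J: "J \<subseteq> {..<m}" "T = D ` J" by (auto simp: subset_image_iff)
    moreover have "card J = 3"
      using T(2) J card_image[OF inj_on_subset[OF \<open>inj_on D {..<m}\<close> J(1)]] by simp
    moreover have "\<forall>i\<in>J. \<forall>j\<in>J. dist (c i) (c j) \<le> vr_scale m c r * (r i + r j)"
    proof (intro ballI)
      fix i j assume "i \<in> J" "j \<in> J"
      then have ij: "i < m" "j < m" "r i > 0" "r j > 0" using J(1) assms(2) by auto
      show "dist (c i) (c j) \<le> vr_scale m c r * (r i + r j)"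
      proof (cases "i = j")
        case True
        then show ?thesis using ij assms(4) by simp
      qed (use dist_le_vr_scale ij in blast)
    qed
    moreover have "finite J" "\<forall>i\<in>J. r i > 0" using J(1) assms(2) finite_subset by auto
    ultimately obtain x where "\<forall>i\<in>J. dist x (c i) \<le> sqrt (4/3) * vr_scale m c r * r i"
      using Jung_three_balls[of J r c "vr_scale m c r"] by force
    then have "x \<in> \<Inter>T" using J(2) by (auto simp: D_def dist_commute)
    then show "\<Inter>T \<noteq> {}" by blast
  qed
  then show ?thesis by (simp add: D_def)
qed

theorem lemma4p2:
  fixes m :: nat and c :: "nat \<Rightarrow> real \<times> real" and r :: "nat \<Rightarrow> real" and lam :: real
  assumes "m \<ge> 3"
    and "\<forall>i<m. r i > 0"
    and "\<forall>i<m. \<forall>j<m. i \<noteq> j \<longrightarrow> cball (c i) (r i) \<noteq> cball (c j) (r j)"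
    and "vr_scale m c r > 0"
    and "lam \<ge> vr_scale m c r"
  shows "((\<Inter>i\<in>{..<m}. cball (c i) (lam * r i)) \<noteq> {} \<longleftrightarrow> rho m c r lam \<ge> 0)
         \<and> rho m c r (sqrt (4/3) * vr_scale m c r) \<ge> 0"
proof
  show "(\<Inter>i\<in>{..<m}. cball (c i) (lam * r i)) \<noteq> {} \<longleftrightarrow> rho m c r lam \<ge> 0"
    using Inter_cball_nonempty_iff_rho_nonneg[OF assms] .
  have "vr_scale m c r \<le> sqrt (4/3) * vr_scale m c r"
    using assms(4) by (simp add: real_le_rsqrt)
  with Inter_cball_nonempty_iff_rho_nonneg[OF assms(1-4)] Inter_cball_sqrt_four_thirds_nonempty[OF assms(1-4)]
  show "rho m c r (sqrt (4/3) * vr_scale m c r) \<ge> 0" by blast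
qed

end
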